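(* For every integer $t\ge 2$, with $n:=2^{t-2}$, the Erdős–Szekeres construction of $n$ points can be realized with integer coordinates: there is an Erdős–Szekeres construction for $t$, in general position, all of whose points have integer coordinates and lie in an axis-parallel square of side length $O(n^2(\log_2 n)^3)$ (as $t\to\infty$).
   Context: For finite point sets $X,Y$ in the plane, $X$ is high above $Y$ if every line determined by two points of $X$ lies strictly above every point of $Y$, and every line determined by two points of $Y$ lies strictly below every point of $X$. For positive integers $k,l$, an $S_{k,l}$-set is defined recursively: if $k\le 2$ or $l\le 2$ it is a single point; otherwise it is a set $L\cup R$ where $L$ is an $S_{k-1,l}$-set, $R$ is an $S_{k,l-1}$-set, every point of $R$ lies strictly to the right of every point of $L$, and $R$ is high above $L$. (An $S_{k,l}$-set has $\binom{k+l-4}{k-2}$ points.) An Erdős–Szekeres construction for $t$ is a point set $\bigcup_{i=0}^{t-2}A_i$, where each $A_i$ is an $S_{t-i,i+2}$-set, such that: for $i<j$ every point of $A_i$ has smaller $x$-coordinate than every point of $A_j$; every line through a point of $A_i$ and a point of $A_j$ with $i\ne j$ has negative slope; and for $0\le i<j<k\le t-2$ and any $p_i\in A_i$, $p_j\in A_j$, $p_k\in A_k$, the triple $(p_i,p_j,p_k)$ is a right (clockwise) turn. It has $2^{t-2}$ points. *)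

theory Defs
  imports Complex_Main
begin

type_synonym point = "real \<times> real"

definition line_above :: "point \<Rightarrow> point \<Rightarrow> point \<Rightarrow> bool" where
  "line_above p q r \<longleftrightarrow> fst p \<noteq> fst q \<and>
     snd r < snd p + (snd q - snd p) / (fst q - fst p) * (fst r - fst p)"

definition line_below :: "point \<Rightarrow> point \<Rightarrow> point \<Rightarrow> bool" where
  "line_below p q r \<longleftrightarrow> fst p \<noteq> fst q \<and>
     snd r > snd p + (snd q - snd p) / (fst q - fst p) * (fst r - fst p)"

definition high_above :: "point set \<Rightarrow> point set \<Rightarrow> bool" where
  "high_above X Y \<longleftrightarrow>
     (\<forall>p\<in>X. \<forall>q\<in>X. p \<noteq> q \<longrightarrow> (\<forall>r\<in>Y. line_above p q r)) \<and>
     (\<forall>p\<in>Y. \<forall>q\<in>Y. p \<noteq> q \<longrightarrow> (\<forall>r\<in>X. line_below p q r))"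

fun S_set :: "nat \<Rightarrow> nat \<Rightarrow> point set \<Rightarrow> bool" where
  "S_set k l X =
     (if k \<le> 2 \<or> l \<le> 2 then (\<exists>p. X = {p})
      else (\<exists>L R. X = L \<union> R \<and> S_set (k - 1) l L \<and> S_set k (l - 1) R \<and>
                 (\<forall>p\<in>L. \<forall>q\<in>R. fst p < fst q) \<and> high_above R L))"

definition right_turn :: "point \<Rightarrow> point \<Rightarrow> point \<Rightarrow> bool" where
  "right_turn p q r \<longleftrightarrow>
     (fst q - fst p) * (snd r - snd p) - (snd q - snd p) * (fst r - fst p) < 0"

definition ES_construction :: "nat \<Rightarrow> point set \<Rightarrow> bool" where
  "ES_construction t P \<longleftrightarrow> (\<exists>A :: nat \<Rightarrow> point set.
     P = (\<Union>i\<in>{0..t-2}. A i) \<and>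
     (\<forall>i\<in>{0..t-2}. S_set (t - i) (i + 2) (A i)) \<and>
     (\<forall>i\<in>{0..t-2}. \<forall>j\<in>{0..t-2}. i < j \<longrightarrow> (\<forall>p\<in>A i. \<forall>q\<in>A j. fst p < fst q)) \<and>
     (\<forall>i\<in>{0..t-2}. \<forall>j\<in>{0..t-2}. i \<noteq> j \<longrightarrow> (\<forall>p\<in>A i. \<forall>q\<in>A j.
         fst p \<noteq> fst q \<and> (snd q - snd p) / (fst q - fst p) < 0)) \<and>
     (\<forall>i j k. i < j \<and> j < k \<and> k \<le> t - 2 \<longrightarrow>
         (\<forall>p\<in>A i. \<forall>q\<in>A j. \<forall>r\<in>A k. right_turn p q r)))"

definition collinear3 :: "point \<Rightarrow> point \<Rightarrow> point \<Rightarrow> bool" where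
  "collinear3 p q r \<longleftrightarrow>
     (fst q - fst p) * (snd r - snd p) - (snd q - snd p) * (fst r - fst p) = 0"

definition general_position :: "point set \<Rightarrow> bool" where
  "general_position P \<longleftrightarrow> (\<forall>p\<in>P. \<forall>q\<in>P. \<forall>r\<in>P.
     p \<noteq> q \<and> q \<noteq> r \<and> p \<noteq> r \<longrightarrow> \<not> collinear3 p q r)"

definition integral_points :: "point set \<Rightarrow> bool" where
  "integral_points P \<longleftrightarrow> (\<forall>p\<in>P. fst p \<in> \<int> \<and> snd p \<in> \<int>)"

definition in_square :: "real \<Rightarrow> point set \<Rightarrow> bool" where
  "in_square s P \<longleftrightarrow> (\<exists>a b. \<forall>p\<in>P.
     a \<le> fst p \<and> fst p \<le> a + s \<and> b \<le> snd p \<and> snd p \<le> b + s)"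

end

theory Submission
  imports Defs
begin

text \<open>
  Write d = t - 2. The points of the i-th group are indexed by the i-element subsets S of
  {0, ..., d - 1}: S gives the integer point (sum of 4^k, sum of (k + 1) 4^k, over k in S).
  If the largest element of the symmetric difference of A and B is j and lies in B, the segment
  from the point of A to the point of B has slope strictly between j + 2/3 and j + 5/3, so slopes
  are ordered by this top level j. Splitting the subsets by whether they contain the top element m
  realises the recursive decomposition of an S-set: the points of the sets containing m lie to
  the right of and high above the others, since segments inside either part have level below m
  while segments between the parts have level m. The groups are translated along the concave
  parabola (i T, - T i^2) with T = 16 (d + 1) 4^d; as a group is less than 4^d wide and at most
  d 4^d high, the parabola dictates the right turns and negative slopes between groups, and all
  coordinates stay within O(d^3 4^d) = O(n^2 log^3 n).
\<close>

section \<open>Orientation and lines\<close>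

definition orient :: "point \<Rightarrow> point \<Rightarrow> point \<Rightarrow> real" where
  "orient p q r = (fst q - fst p) * (snd r - snd p) - (snd q - snd p) * (fst r - fst p)"

lemma right_turn_iff_orient: "right_turn p q r \<longleftrightarrow> orient p q r < 0"
  by (simp add: right_turn_def orient_def)

lemma collinear3_iff_orient: "collinear3 p q r \<longleftrightarrow> orient p q r = 0"
  by (simp add: collinear3_def orient_def)

lemma collinear3_perms:
  "collinear3 q p r \<longleftrightarrow> collinear3 p q r" "collinear3 p r q \<longleftrightarrow> collinear3 p q r"
  "collinear3 q r p \<longleftrightarrow> collinear3 p q r"
  by (simp_all add: collinear3_def algebra_simps, argo+)

lemma less_divide_mult_iff:
  fixes u v w d :: real
  assumes "d \<noteq> 0"
  shows "v < u / d * w \<longleftrightarrow> d * (d * v - u * w) < 0"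
    and "u / d * w < v \<longleftrightarrow> 0 < d * (d * v - u * w)"
proof -
  have e: "d * (d * v - u * w) = d\<^sup>2 * (v - u / d * w)"
    using assms by (simp add: field_simps power2_eq_square)
  have pos: "0 < d\<^sup>2" using assms by simp
  show "v < u / d * w \<longleftrightarrow> d * (d * v - u * w) < 0"
    unfolding e using pos by (simp add: mult_less_0_iff)
  show "u / d * w < v \<longleftrightarrow> 0 < d * (d * v - u * w)"
    unfolding e using pos by (simp add: zero_less_mult_iff)
qed

lemma line_above_iff_orient:
  "line_above p q r \<longleftrightarrow> fst p \<noteq> fst q \<and> (fst q - fst p) * orient p q r < 0"
proof -
  have "line_above p q r \<longleftrightarrow>
      fst p \<noteq> fst q \<and> snd r - snd p < (snd q - snd p) / (fst q - fst p) * (fst r - fst p)"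
    unfolding line_above_def by auto
  then show ?thesis
    using less_divide_mult_iff(1)[where d="fst q - fst p"] by (auto simp: orient_def)
qed

lemma line_below_iff_orient:
  "line_below p q r \<longleftrightarrow> fst p \<noteq> fst q \<and> 0 < (fst q - fst p) * orient p q r"
proof -
  have "line_below p q r \<longleftrightarrow>
      fst p \<noteq> fst q \<and> (snd q - snd p) / (fst q - fst p) * (fst r - fst p) < snd r - snd p"
    unfolding line_below_def by auto
  then show ?thesis
    using less_divide_mult_iff(2)[where d="fst q - fst p"] by (auto simp: orient_def)
qed

lemma line_above_commute: "line_above q p r \<longleftrightarrow> line_above p q r"
proof -
  have "(fst p - fst q) * orient q p r = (fst q - fst p) * orient p q r"
    by (simp add: orient_def algebra_simps)
  then show ?thesis by (metis line_above_iff_orient)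
qed

lemma line_below_commute: "line_below q p r \<longleftrightarrow> line_below p q r"
proof -
  have "(fst p - fst q) * orient q p r = (fst q - fst p) * orient p q r"
    by (simp add: orient_def algebra_simps)
  then show ?thesis by (metis line_below_iff_orient)
qed

lemma line_above_imp_not_collinear3: "line_above p q r \<Longrightarrow> \<not> collinear3 p q r"
  by (auto simp: line_above_iff_orient collinear3_iff_orient)

lemma line_below_imp_not_collinear3: "line_below p q r \<Longrightarrow> \<not> collinear3 p q r"
  by (auto simp: line_below_iff_orient collinear3_iff_orient)

section \<open>Translates and general position of S-sets\<close>

definition shift :: "real \<Rightarrow> real \<Rightarrow> point \<Rightarrow> point" where
  "shift a b p = (fst p + a, snd p + b)"

lemma orient_shift: "orient (shift a b p) (shift a b q) (shift a b r) = orient p q r"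
  by (simp add: orient_def shift_def)

lemma high_above_shift:
  assumes "high_above X Y"
  shows "high_above (shift a b ` X) (shift a b ` Y)"
proof -
  have dx: "fst (shift a b p) - fst (shift a b q) = fst p - fst q" for p q
    by (simp add: shift_def)
  have above: "line_above (shift a b p) (shift a b q) (shift a b r) \<longleftrightarrow> line_above p q r"
    and below: "line_below (shift a b p) (shift a b q) (shift a b r) \<longleftrightarrow> line_below p q r" for p q r
    unfolding line_above_iff_orient line_below_iff_orient orient_shift
    using dx[of q p] by auto
  show ?thesis
    unfolding high_above_def
  proof (intro conjI ballI impI)
    fix p' q' r' assume "p' \<in> shift a b ` X" "q' \<in> shift a b ` X" "p' \<noteq> q'" "r' \<in> shift a b ` Y"
    then obtain p q r where "p \<in> X" "q \<in> X" "p \<noteq> q" "r \<in> Y"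
      and "p' = shift a b p" "q' = shift a b q" "r' = shift a b r" by blast
    then show "line_above p' q' r'" using assms above by (simp add: high_above_def)
  next
    fix p' q' r' assume "p' \<in> shift a b ` Y" "q' \<in> shift a b ` Y" "p' \<noteq> q'" "r' \<in> shift a b ` X"
    then obtain p q r where "p \<in> Y" "q \<in> Y" "p \<noteq> q" "r \<in> X"
      and "p' = shift a b p" "q' = shift a b q" "r' = shift a b r" by blast
    then show "line_below p' q' r'" using assms below by (simp add: high_above_def)
  qed
qed

declare S_set.simps [simp del]

lemma S_set_singleton: "k \<le> 2 \<or> l \<le> 2 \<Longrightarrow> S_set k l X \<longleftrightarrow> (\<exists>p. X = {p})"
  by (subst S_set.simps) simp

lemma S_set_split: "\<not> (k \<le> 2 \<or> l \<le> 2) \<Longrightarrow> S_set k l X \<longleftrightarrow>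
    (\<exists>L R. X = L \<union> R \<and> S_set (k - 1) l L \<and> S_set k (l - 1) R \<and>
       (\<forall>p\<in>L. \<forall>q\<in>R. fst p < fst q) \<and> high_above R L)"
  by (subst S_set.simps) simp

lemma S_set_shift: "S_set k l X \<Longrightarrow> S_set k l (shift a b ` X)"
proof (induction k l X rule: S_set.induct)
  case (1 k l X)
  show ?case
  proof (cases "k \<le> 2 \<or> l \<le> 2")
    case True
    then show ?thesis using "1.prems" by (auto simp: S_set_singleton)
  next
    case False
    then obtain L R where X: "X = L \<union> R" and "S_set (k - 1) l L" "S_set k (l - 1) R"
      and left: "\<forall>p\<in>L. \<forall>q\<in>R. fst p < fst q" and "high_above R L"
      using "1.prems" unfolding S_set_split[OF False] by blast
    have "S_set (k - 1) l (shift a b ` L)" "S_set k (l - 1) (shift a b ` R)"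
      using "1.IH"[OF False] \<open>S_set (k - 1) l L\<close> \<open>S_set k (l - 1) R\<close> by blast+
    moreover have "high_above (shift a b ` R) (shift a b ` L)"
      using \<open>high_above R L\<close> by (rule high_above_shift)
    moreover have "\<forall>p\<in>shift a b ` L. \<forall>q\<in>shift a b ` R. fst p < fst q"
      using left by (simp add: shift_def)
    ultimately show ?thesis
      unfolding X image_Un S_set_split[OF False] by blast
  qed
qed

lemma general_position_Un:
  assumes L: "general_position L" and R: "general_position R"
    and LLR: "\<And>p q r. p \<in> L \<Longrightarrow> q \<in> L \<Longrightarrow> p \<noteq> q \<Longrightarrow> r \<in> R \<Longrightarrow> \<not> collinear3 p q r"
    and RRL: "\<And>p q r. p \<in> R \<Longrightarrow> q \<in> R \<Longrightarrow> p \<noteq> q \<Longrightarrow> r \<in> L \<Longrightarrow> \<not> collinear3 p q r"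
  shows "general_position (L \<union> R)"
  unfolding general_position_def
proof (intro ballI impI)
  fix p q r assume "p \<in> L \<union> R" "q \<in> L \<union> R" "r \<in> L \<union> R" and d: "p \<noteq> q \<and> q \<noteq> r \<and> p \<noteq> r"
  then consider "p \<in> L" "q \<in> L" "r \<in> L" | "p \<in> R" "q \<in> R" "r \<in> R"
    | "p \<in> L" "q \<in> L" "r \<in> R" | "p \<in> R" "q \<in> R" "r \<in> L"
    | "p \<in> L" "r \<in> L" "q \<in> R" | "p \<in> R" "r \<in> R" "q \<in> L"
    | "q \<in> L" "r \<in> L" "p \<in> R" | "q \<in> R" "r \<in> R" "p \<in> L"
    by auto
  then show "\<not> collinear3 p q r"
  proof cases
    case 1 then show ?thesis using L d by (simp add: general_position_def)
  next
    case 2 then show ?thesis using R d by (simp add: general_position_def)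
  next
    case 3 then show ?thesis using LLR d by simp
  next
    case 4 then show ?thesis using RRL d by simp
  next
    case 5 then show ?thesis using LLR[of p r q] d collinear3_perms(2) by simp
  next
    case 6 then show ?thesis using RRL[of p r q] d collinear3_perms(2) by simp
  next
    case 7 then show ?thesis using LLR[of q r p] d collinear3_perms(3) by simp
  next
    case 8 then show ?thesis using RRL[of q r p] d collinear3_perms(3) by simp
  qed
qed

lemma S_set_general_position: "S_set k l X \<Longrightarrow> general_position X"
proof (induction k l X rule: S_set.induct)
  case (1 k l X)
  show ?case
  proof (cases "k \<le> 2 \<or> l \<le> 2")
    case True
    then show ?thesis using "1.prems" by (auto simp: S_set_singleton general_position_def)
  next
    case False
    then obtain L R where X: "X = L \<union> R" and "S_set (k - 1) l L" "S_set k (l - 1) R"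
      and high: "high_above R L"
      using "1.prems" unfolding S_set_split[OF False] by blast
    then have "general_position L" "general_position R"
      using "1.IH"[OF False] by blast+
    then show ?thesis
      unfolding X using high
      by (intro general_position_Un)
        (simp_all add: high_above_def line_above_imp_not_collinear3 line_below_imp_not_collinear3)
  qed
qed

section \<open>Points indexed by finite sets of naturals\<close>

definition colex_less_at :: "nat set \<Rightarrow> nat set \<Rightarrow> nat \<Rightarrow> bool" where
  "colex_less_at A B j \<longleftrightarrow> j \<notin> A \<and> j \<in> B \<and> (\<forall>k>j. k \<in> A \<longleftrightarrow> k \<in> B)"

lemma colex_less_at_cases:
  assumes "A \<subseteq> {..<m}" "B \<subseteq> {..<m}" "A \<noteq> B"
  obtains j where "j < m" "colex_less_at A B j \<or> colex_less_at B A j"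
proof -
  define D where "D = (A - B) \<union> (B - A)"
  have D: "finite D" "D \<noteq> {}" "D \<subseteq> {..<m}"
    using assms by (auto simp: D_def intro: finite_subset[OF _ finite_lessThan])
  define j where "j = Max D"
  have "j \<in> D" using D by (simp add: j_def)
  have "k \<in> A \<longleftrightarrow> k \<in> B" if "j < k" for k
  proof -
    have "k \<notin> D" using D that by (metis Max_ge j_def leD)
    then show ?thesis by (auto simp: D_def)
  qed
  then have "colex_less_at A B j \<or> colex_less_at B A j"
    using \<open>j \<in> D\<close> unfolding D_def colex_less_at_def by blast
  moreover have "j < m" using \<open>j \<in> D\<close> D(3) by blast
  ultimately show thesis using that by blast
qed

lemma colex_less_at_insert: "colex_less_at A B j \<Longrightarrow> j \<noteq> m \<Longrightarrow> colex_less_at (insert m A) (insert m B) j"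
  by (auto simp: colex_less_at_def)

lemma colex_less_at_insert_top: "A \<subseteq> {..<m} \<Longrightarrow> C \<subseteq> {..<m} \<Longrightarrow> colex_less_at C (insert m A) m"
  by (auto simp: colex_less_at_def)

lemma sum_diff_ge_colex:
  fixes f :: "nat \<Rightarrow> real"
  assumes "finite A" "finite B" "colex_less_at A B j"
  shows "f j - (\<Sum>k<j. \<bar>f k\<bar>) \<le> sum f B - sum f A"
proof -
  define A' where "A' = A - B"
  define B' where "B' = B - A - {j}"
  have below: "A' \<subseteq> {..<j}" "B' \<subseteq> {..<j}"
    using assms(3) unfolding colex_less_at_def A'_def B'_def by (auto simp: not_less_iff_gr_or_eq)
  have fin: "finite A'" "finite B'" using assms by (simp_all add: A'_def B'_def)
  have "sum f B - sum f A = sum f (B - A) - sum f A'"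
    using sum.Int_Diff[of B f A] sum.Int_Diff[of A f B] assms(1,2) by (simp add: A'_def Int_commute)
  also have "sum f (B - A) = f j + sum f B'"
    using assms by (simp add: B'_def colex_less_at_def sum.remove)
  finally have diff: "sum f B - sum f A = f j + sum f B' - sum f A'" .
  have "sum f A' \<le> (\<Sum>k\<in>A'. \<bar>f k\<bar>)" "(\<Sum>k\<in>B'. - f k) \<le> (\<Sum>k\<in>B'. \<bar>f k\<bar>)"
    by (intro sum_mono; simp)+
  then have "sum f A' - sum f B' \<le> (\<Sum>k\<in>A'. \<bar>f k\<bar>) + (\<Sum>k\<in>B'. \<bar>f k\<bar>)"
    by (simp add: sum_negf)
  also have "\<dots> = (\<Sum>k\<in>A' \<union> B'. \<bar>f k\<bar>)"
    using fin by (rule sum.union_disjoint[symmetric]) (auto simp: A'_def B'_def)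
  also have "\<dots> \<le> (\<Sum>k<j. \<bar>f k\<bar>)"
    using below by (intro sum_mono2) auto
  finally show ?thesis using diff by linarith
qed

lemma sum_pow4_less: "(\<Sum>k<j. (4::real) ^ k) < 4 ^ j"
proof -
  have "4 ^ j - 1 = 3 * (\<Sum>k<j. (4::real) ^ k)"
    using power_diff_1_eq[of "4::real" j] by simp
  moreover have "(0::real) < 4 ^ j" by simp
  ultimately show ?thesis by linarith
qed

lemma sum_affine_pow4:
  "3 * (\<Sum>k<j. (3 * (real j - real k) + c) * 4 ^ k) = 4 ^ Suc j - 3 * real j - 4 + c * (4 ^ j - 1)"
proof (induction j)
  case (Suc j)
  have "(\<Sum>k<Suc j. (3 * (real (Suc j) - real k) + c) * 4 ^ k)
      = (\<Sum>k<j. (3 * (real j - real k) + c) * 4 ^ k + 3 * 4 ^ k) + (3 + c) * 4 ^ j"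
    by (simp add: algebra_simps)
  also have "\<dots> = (\<Sum>k<j. (3 * (real j - real k) + c) * 4 ^ k) + 3 * (\<Sum>k<j. 4 ^ k) + (3 + c) * 4 ^ j"
    by (simp add: sum.distrib sum_distrib_left)
  also have "3 * (\<Sum>k<j. (4::real) ^ k) = 4 ^ j - 1"
    using power_diff_1_eq[of "4::real" j] by simp
  finally show ?case using Suc.IH by (simp add: algebra_simps)
qed simp

definition bit_point :: "nat set \<Rightarrow> point" where
  "bit_point S = ((\<Sum>k\<in>S. 4 ^ k), (\<Sum>k\<in>S. (real k + 1) * 4 ^ k))"

lemma bit_point_slope:
  assumes "finite A" "finite B" "colex_less_at A B j"
  defines "dx \<equiv> fst (bit_point B) - fst (bit_point A)"
    and "dy \<equiv> snd (bit_point B) - snd (bit_point A)"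
  shows "0 < dx" and "(3 * real j + 2) * dx < 3 * dy" and "3 * dy < (3 * real j + 5) * dx"
proof -
  define f where "f \<alpha> \<beta> k = \<alpha> * 4 ^ k + \<beta> * ((real k + 1) * 4 ^ k)" for \<alpha> \<beta> :: real and k
  have lin: "sum (f \<alpha> \<beta>) B - sum (f \<alpha> \<beta>) A = \<alpha> * dx + \<beta> * dy" for \<alpha> \<beta>
    by (simp add: f_def dx_def dy_def bit_point_def sum.distrib sum_distrib_left[symmetric] algebra_simps)
  note bound = sum_diff_ge_colex[OF assms(1-3)]
  have "0 < 4 ^ j - (\<Sum>k<j. \<bar>f 1 0 k\<bar>)"
    using sum_pow4_less[of j] by (simp add: f_def)
  then show "0 < dx" using bound[of "f 1 0"] lin[of 1 0] by (simp add: f_def)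
  have "\<bar>f (- (3 * real j + 2)) 3 k\<bar> = (3 * (real j - real k) + - 1) * 4 ^ k" if "k < j" for k
  proof -
    have "f (- (3 * real j + 2)) 3 k = - ((3 * (real j - real k) - 1) * 4 ^ k)"
      by (simp add: f_def algebra_simps)
    moreover have "0 \<le> (3 * (real j - real k) - 1) * (4::real) ^ k" using that by simp
    ultimately show ?thesis by simp
  qed
  then have "3 * (\<Sum>k<j. \<bar>f (- (3 * real j + 2)) 3 k\<bar>) = 3 * 4 ^ j - 3 * real j - 3"
    using sum_affine_pow4[of j "- 1"] by simp
  then show "(3 * real j + 2) * dx < 3 * dy"
    using bound[of "f (- (3 * real j + 2)) 3"] lin[of "- (3 * real j + 2)" 3] by (simp add: f_def algebra_simps)
  have "\<bar>f (3 * real j + 5) (- 3) k\<bar> = (3 * (real j - real k) + 2) * 4 ^ k" if "k < j" for k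
  proof -
    have "f (3 * real j + 5) (- 3) k = (3 * (real j - real k) + 2) * 4 ^ k"
      by (simp add: f_def algebra_simps)
    moreover have "0 \<le> (3 * (real j - real k) + 2) * (4::real) ^ k" using that by simp
    ultimately show ?thesis by simp
  qed
  then have "3 * (\<Sum>k<j. \<bar>f (3 * real j + 5) (- 3) k\<bar>) = 6 * 4 ^ j - 3 * real j - 6"
    using sum_affine_pow4[of j 2] by simp
  then show "3 * dy < (3 * real j + 5) * dx"
    using bound[of "f (3 * real j + 5) (- 3)"] lin[of "3 * real j + 5" "- 3"] by (simp add: f_def algebra_simps)
qed

lemma bit_point_less:
  assumes "finite A" "finite B" "colex_less_at A B j"
  shows "fst (bit_point A) < fst (bit_point B)" "snd (bit_point A) < snd (bit_point B)"
proof -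
  note slope = bit_point_slope[OF assms]
  then show "fst (bit_point A) < fst (bit_point B)" by simp
  have "0 < (3 * real j + 2) * (fst (bit_point B) - fst (bit_point A))"
    using slope(1) by simp
  then show "snd (bit_point A) < snd (bit_point B)" using slope(2) by simp
qed

lemma bit_point_cross:
  assumes "finite A" "finite B" "colex_less_at A B j"
    and "finite C" "finite D" "colex_less_at C D m" and "j < m"
  shows "(snd (bit_point B) - snd (bit_point A)) * (fst (bit_point D) - fst (bit_point C))
       < (fst (bit_point B) - fst (bit_point A)) * (snd (bit_point D) - snd (bit_point C))"
proof -
  define dx1 dy1 dx2 dy2
    where "dx1 = fst (bit_point B) - fst (bit_point A)" and "dy1 = snd (bit_point B) - snd (bit_point A)"
      and "dx2 = fst (bit_point D) - fst (bit_point C)" and "dy2 = snd (bit_point D) - snd (bit_point C)"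
  note s1 = bit_point_slope[OF assms(1-3), folded dx1_def dy1_def]
  note s2 = bit_point_slope[OF assms(4-6), folded dx2_def dy2_def]
  have "3 * dy1 * dx2 < (3 * real j + 5) * dx1 * dx2"
    using s1(3) s2(1) by (simp add: mult_strict_right_mono)
  also have "\<dots> \<le> (3 * real m + 2) * dx2 * dx1"
    using \<open>j < m\<close> s1(1) s2(1) by (simp add: mult.commute mult.left_commute mult_right_mono)
  also have "\<dots> < 3 * dy2 * dx1"
    using s2(2) s1(1) by (simp add: mult_strict_right_mono)
  finally have "3 * (dy1 * dx2) < 3 * (dx1 * dy2)" by (simp add: mult_ac)
  then show ?thesis by (simp add: dx1_def dy1_def dx2_def dy2_def)
qed

lemma bit_point_line_above:
  assumes "A \<subseteq> {..<m}" "B \<subseteq> {..<m}" "C \<subseteq> {..<m}" "A \<noteq> B"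
  shows "line_above (bit_point (insert m A)) (bit_point (insert m B)) (bit_point C)"
proof -
  have fin: "finite S" if "S \<subseteq> {..<m}" for S using finite_subset[OF that] by simp
  have ordered: "line_above (bit_point (insert m A')) (bit_point (insert m B')) (bit_point C)"
    if "A' \<subseteq> {..<m}" "B' \<subseteq> {..<m}" "colex_less_at A' B' j" "j < m" for A' B' j
  proof -
    have "colex_less_at (insert m A') (insert m B') j"
      using that by (simp add: colex_less_at_insert)
    note slope = bit_point_less[OF _ _ this] and
      cross = bit_point_cross[OF _ _ this _ _ colex_less_at_insert_top[OF that(1) assms(3)] \<open>j < m\<close>]
    have "orient (bit_point (insert m A')) (bit_point (insert m B')) (bit_point C) < 0"
      using cross fin that(1,2) assms(3) by (simp add: orient_def algebra_simps)
    then show ?thesis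
      using slope fin that(1,2) by (simp add: line_above_iff_orient mult_pos_neg)
  qed
  obtain j where "j < m" "colex_less_at A B j \<or> colex_less_at B A j"
    using colex_less_at_cases[OF assms(1,2,4)] .
  then show ?thesis
    using ordered[OF assms(1,2)] ordered[OF assms(2,1), THEN line_above_commute[THEN iffD1]] by blast
qed

lemma bit_point_line_below:
  assumes "A \<subseteq> {..<m}" "B \<subseteq> {..<m}" "C \<subseteq> {..<m}" "A \<noteq> B"
  shows "line_below (bit_point A) (bit_point B) (bit_point (insert m C))"
proof -
  have fin: "finite S" if "S \<subseteq> {..<m}" for S using finite_subset[OF that] by simp
  have ordered: "line_below (bit_point A') (bit_point B') (bit_point (insert m C))"
    if "A' \<subseteq> {..<m}" "B' \<subseteq> {..<m}" "colex_less_at A' B' j" "j < m" for A' B' j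
  proof -
    note slope = bit_point_less[OF _ _ that(3)] and
      cross = bit_point_cross[OF _ _ that(3) _ _ colex_less_at_insert_top[OF assms(3) that(1)] \<open>j < m\<close>]
    have "0 < orient (bit_point A') (bit_point B') (bit_point (insert m C))"
      using cross fin that(1,2) assms(3) by (simp add: orient_def algebra_simps)
    then show ?thesis
      using slope fin that(1,2) by (simp add: line_below_iff_orient)
  qed
  obtain j where "j < m" "colex_less_at A B j \<or> colex_less_at B A j"
    using colex_less_at_cases[OF assms(1,2,4)] .
  then show ?thesis
    using ordered[OF assms(1,2)] ordered[OF assms(2,1), THEN line_below_commute[THEN iffD1]] by blast
qed

lemma bit_points_high_above:
  assumes "\<forall>A\<in>\<A>. A \<subseteq> {..<m}" "\<forall>C\<in>\<C>. C \<subseteq> {..<m}"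
  shows "high_above (bit_point ` insert m ` \<A>) (bit_point ` \<C>)"
  unfolding high_above_def
proof (intro conjI ballI impI)
  fix p q r assume p: "p \<in> bit_point ` insert m ` \<A>" and q: "q \<in> bit_point ` insert m ` \<A>"
    and "p \<noteq> q" and r: "r \<in> bit_point ` \<C>"
  obtain A where A: "A \<in> \<A>" "p = bit_point (insert m A)" using p by blast
  obtain B where B: "B \<in> \<A>" "q = bit_point (insert m B)" using q by blast
  obtain C where C: "C \<in> \<C>" "r = bit_point C" using r by blast
  have "A \<noteq> B" using A B \<open>p \<noteq> q\<close> by blast
  then show "line_above p q r"
    unfolding A B C using assms A B C by (intro bit_point_line_above) simp_all
next
  fix p q r assume p: "p \<in> bit_point ` \<C>" and q: "q \<in> bit_point ` \<C>"
    and "p \<noteq> q" and r: "r \<in> bit_point ` insert m ` \<A>"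
  obtain A where A: "A \<in> \<C>" "p = bit_point A" using p by blast
  obtain B where B: "B \<in> \<C>" "q = bit_point B" using q by blast
  obtain C where C: "C \<in> \<A>" "r = bit_point (insert m C)" using r by blast
  have "A \<noteq> B" using A B \<open>p \<noteq> q\<close> by blast
  then show "line_below p q r"
    unfolding A B C using assms A B C by (intro bit_point_line_below) simp_all
qed

definition subsets_of_card :: "nat \<Rightarrow> nat \<Rightarrow> nat set set" where
  "subsets_of_card n j = {S. S \<subseteq> {..<n} \<and> card S = j}"

lemma subsets_of_card_0: "subsets_of_card n 0 = {{}}"
proof -
  have "card S = 0 \<longleftrightarrow> S = {}" if "S \<subseteq> {..<n}" for S
    using finite_subset[OF that finite_lessThan] by simp
  then show ?thesis unfolding subsets_of_card_def by auto
qed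

lemma subsets_of_card_all: "subsets_of_card n n = {{..<n}}"
proof -
  have "card S = n \<longleftrightarrow> S = {..<n}" if "S \<subseteq> {..<n}" for S
    using card_subset_eq[OF finite_lessThan that] by auto
  then show ?thesis unfolding subsets_of_card_def by auto
qed

lemma subsets_of_card_Suc:
  assumes "0 < j"
  shows "subsets_of_card (Suc m) j = subsets_of_card m j \<union> insert m ` subsets_of_card m (j - 1)"
proof -
  have "card (insert m T) = j \<longleftrightarrow> card T = j - 1" if "T \<subseteq> {..<m}" for T
  proof -
    have "card (insert m T) = Suc (card T)"
      using that finite_subset[OF that finite_lessThan] by (intro card_insert_disjoint) auto
    then show ?thesis using assms by linarith
  qed
  then have "{T. T \<subseteq> {..<m} \<and> card (insert m T) = j} = {T. T \<subseteq> {..<m} \<and> card T = j - 1}"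
    by auto
  then show ?thesis
    unfolding subsets_of_card_def lessThan_Suc subset_insert_lemma setcompr_eq_image by simp
qed

lemma bit_points_insert:
  assumes "\<forall>A\<in>\<A>. A \<subseteq> {..<m}"
  shows "bit_point ` insert m ` \<A> = shift (4 ^ m) ((real m + 1) * 4 ^ m) ` bit_point ` \<A>"
  unfolding image_image
proof (rule image_cong)
  fix A assume "A \<in> \<A>"
  then have "finite A" "m \<notin> A" using assms finite_subset[OF _ finite_lessThan] by auto
  then show "bit_point (insert m A) = shift (4 ^ m) ((real m + 1) * 4 ^ m) (bit_point A)"
    by (simp add: bit_point_def shift_def)
qed simp

lemma bit_points_insert_right:
  assumes "\<forall>A\<in>\<A>. A \<subseteq> {..<m}" "\<forall>C\<in>\<C>. C \<subseteq> {..<m}"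
  shows "\<forall>p\<in>bit_point ` \<C>. \<forall>q\<in>bit_point ` insert m ` \<A>. fst p < fst q"
proof (intro ballI)
  fix p q assume p: "p \<in> bit_point ` \<C>" and q: "q \<in> bit_point ` insert m ` \<A>"
  obtain C where C: "C \<in> \<C>" "p = bit_point C" using p by blast
  obtain A where A: "A \<in> \<A>" "q = bit_point (insert m A)" using q by blast
  have "A \<subseteq> {..<m}" "C \<subseteq> {..<m}" using A C assms by simp_all
  then show "fst p < fst q" unfolding A C
    using bit_point_less(1)[OF _ _ colex_less_at_insert_top] finite_subset[OF _ finite_lessThan]
    by (metis finite_insert)
qed

lemma S_set_bit_points: "j \<le> n \<Longrightarrow> S_set (n - j + 2) (j + 2) (bit_point ` subsets_of_card n j)"
proof (induction n arbitrary: j)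
  case 0
  then show ?case by (simp add: subsets_of_card_0 S_set_singleton)
next
  case (Suc m)
  consider "j = 0" | "j = Suc m" | "0 < j" "j \<le> m" using Suc.prems by linarith
  then show ?case
  proof cases
    case 1
    then show ?thesis by (simp add: subsets_of_card_0 S_set_singleton)
  next
    case 2
    then show ?thesis by (simp add: subsets_of_card_all S_set_singleton)
  next
    case 3
    define L where "L = bit_point ` subsets_of_card m j"
    define R where "R = bit_point ` insert m ` subsets_of_card m (j - 1)"
    have sub: "\<forall>A\<in>subsets_of_card m i. A \<subseteq> {..<m}" for i
      by (simp add: subsets_of_card_def)
    have split: "\<not> (Suc m - j + 2 \<le> 2 \<or> j + 2 \<le> 2)" using 3 by simp
    have "S_set (Suc m - j + 2 - 1) (j + 2) L"
      using Suc.IH[of j] 3 by (simp add: L_def Suc_diff_le)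
    moreover have "S_set (Suc m - j + 2) (j + 2 - 1) R"
      unfolding R_def bit_points_insert[OF sub] using Suc.IH[of "j - 1"] 3
      by (simp add: S_set_shift Suc_diff_le)
    moreover have "\<forall>p\<in>L. \<forall>q\<in>R. fst p < fst q"
      unfolding L_def R_def by (rule bit_points_insert_right[OF sub sub])
    moreover have "high_above R L"
      unfolding L_def R_def by (rule bit_points_high_above[OF sub sub])
    moreover have "bit_point ` subsets_of_card (Suc m) j = L \<union> R"
      unfolding L_def R_def subsets_of_card_Suc[OF \<open>0 < j\<close>] by blast
    ultimately show ?thesis unfolding S_set_split[OF split] by blast
  qed
qed

lemma bit_point_bounds:
  assumes "S \<subseteq> {..<d}"
  shows "0 \<le> fst (bit_point S)" "fst (bit_point S) \<le> 4 ^ d - 1"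
    and "0 \<le> snd (bit_point S)" "snd (bit_point S) \<le> real d * 4 ^ d"
proof -
  have geom: "3 * (\<Sum>k<d. (4::real) ^ k) = 4 ^ d - 1"
    using power_diff_1_eq[of "4::real" d] by simp
  have "fst (bit_point S) \<le> (\<Sum>k<d. 4 ^ k)"
    unfolding bit_point_def using assms by (simp add: sum_mono2)
  moreover have "(1::real) \<le> 4 ^ d" by simp
  ultimately show "fst (bit_point S) \<le> 4 ^ d - 1" using geom by linarith
  show "0 \<le> fst (bit_point S)" "0 \<le> snd (bit_point S)"
    by (simp_all add: bit_point_def sum_nonneg)
  have "snd (bit_point S) \<le> (\<Sum>k<d. (real k + 1) * 4 ^ k)"
    unfolding bit_point_def using assms by (simp add: sum_mono2)
  also have "\<dots> \<le> (\<Sum>k<d. real d * 4 ^ k)"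
    by (intro sum_mono mult_right_mono) auto
  also have "\<dots> \<le> real d * 4 ^ d"
    using sum_pow4_less[of d] by (simp add: sum_distrib_left[symmetric] mult_left_mono)
  finally show "snd (bit_point S) \<le> real d * 4 ^ d" .
qed

lemma bit_point_Ints: "fst (bit_point S) \<in> \<int>" "snd (bit_point S) \<in> \<int>"
  unfolding bit_point_def by (auto intro!: Ints_mult Ints_add Ints_power)

section \<open>Groups along a parabola\<close>

lemma orient_shifted_parabola_eq:
  "orient (shift (a * T) (- K * a\<^sup>2) (x1, y1)) (shift (b * T) (- K * b\<^sup>2) (x2, y2))
      (shift (c * T) (- K * c\<^sup>2) (x3, y3))
    = - (K * T * ((b - a) * (c - b) * (c - a)))
      + (T * ((b - a) * (y3 - y1) - (c - a) * (y2 - y1))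
      + K * ((b - a) * (b + a) * (x3 - x1) - (c - a) * (c + a) * (x2 - x1))
      + ((x2 - x1) * (y3 - y1) - (y2 - y1) * (x3 - x1)))"
  by (simp add: orient_def shift_def algebra_simps power2_eq_square)

lemma parabola_perturbation_le:
  fixes a b c D T K W H :: real
  assumes "0 \<le> a" "a \<le> b" "b \<le> c" "c \<le> D" "0 \<le> T" "0 \<le> K"
    and dx: "\<bar>x2 - x1\<bar> \<le> W" "\<bar>x3 - x1\<bar> \<le> W" and dy: "\<bar>y2 - y1\<bar> \<le> H" "\<bar>y3 - y1\<bar> \<le> H"
  defines "s \<equiv> (b - a) + (c - a)"
  shows "T * ((b - a) * (y3 - y1) - (c - a) * (y2 - y1))
      + K * ((b - a) * (b + a) * (x3 - x1) - (c - a) * (c + a) * (x2 - x1))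
      + ((x2 - x1) * (y3 - y1) - (y2 - y1) * (x3 - x1))
    \<le> T * (s * H) + K * (s * (2 * D * W)) + 2 * (W * H)"
proof -
  have "\<bar>(b - a) * (y3 - y1)\<bar> \<le> (b - a) * H" "\<bar>(c - a) * (y2 - y1)\<bar> \<le> (c - a) * H"
    using assms dy by (simp_all add: abs_mult mult_left_mono)
  then have "T * ((b - a) * (y3 - y1) - (c - a) * (y2 - y1)) \<le> T * (s * H)"
    using assms by (intro mult_left_mono) (auto simp: s_def abs_le_iff algebra_simps)
  moreover have "(b + a) * \<bar>x3 - x1\<bar> \<le> (2 * D) * W" "(c + a) * \<bar>x2 - x1\<bar> \<le> (2 * D) * W"
    using assms dx by (intro mult_mono; simp)+
  then have "\<bar>(b - a) * (b + a) * (x3 - x1)\<bar> \<le> (b - a) * (2 * D * W)"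
    "\<bar>(c - a) * (c + a) * (x2 - x1)\<bar> \<le> (c - a) * (2 * D * W)"
    using assms by (simp_all add: abs_mult mult_left_mono mult.assoc)
  then have "K * ((b - a) * (b + a) * (x3 - x1) - (c - a) * (c + a) * (x2 - x1)) \<le> K * (s * (2 * D * W))"
    using assms by (intro mult_left_mono) (auto simp: s_def abs_le_iff algebra_simps)
  moreover have "\<bar>(x2 - x1) * (y3 - y1)\<bar> \<le> W * H" "\<bar>(y2 - y1) * (x3 - x1)\<bar> \<le> H * W"
    using dx dy unfolding abs_mult by (intro mult_mono; simp)+
  then have "(x2 - x1) * (y3 - y1) - (y2 - y1) * (x3 - x1) \<le> 2 * (W * H)"
    by (simp add: abs_le_iff algebra_simps)
  ultimately show ?thesis by linarith
qed

lemma orient_shifted_parabola: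
  fixes a b c D T K W H :: real
  assumes abc: "0 \<le> a" "a + 1 \<le> b" "b + 1 \<le> c" "c \<le> D"
    and TK: "0 < T" "0 < K" "16 * (D + 1) * W \<le> T" "8 * H \<le> K"
    and e: "e1 \<in> {0..W} \<times> {0..H}" "e2 \<in> {0..W} \<times> {0..H}" "e3 \<in> {0..W} \<times> {0..H}"
  shows "orient (shift (a * T) (- K * a\<^sup>2) e1) (shift (b * T) (- K * b\<^sup>2) e2)
    (shift (c * T) (- K * c\<^sup>2) e3) < 0"
proof -
  obtain x1 y1 x2 y2 x3 y3 where e_def: "e1 = (x1, y1)" "e2 = (x2, y2)" "e3 = (x3, y3)"
    by (cases e1, cases e2, cases e3) auto
  define u v w where "u = b - a" and "v = c - b" and "w = c - a"
  have uvw: "1 \<le> u" "1 \<le> v" "w = u + v" using abc by (simp_all add: u_def v_def w_def)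
  have W: "0 \<le> W" and H: "0 \<le> H" using e by auto
  have "0 \<le> D * W" using abc W by simp
  then have "16 * W \<le> T" "16 * (D * W) \<le> T" using TK W by (simp_all add: algebra_simps)
  have "\<bar>x2 - x1\<bar> \<le> W" "\<bar>x3 - x1\<bar> \<le> W" "\<bar>y2 - y1\<bar> \<le> H" "\<bar>y3 - y1\<bar> \<le> H"
    using e unfolding e_def by auto
  note err = parabola_perturbation_le[where a = a and b = b and c = c and T = T and K = K,
      OF abc(1) _ _ abc(4) _ _ this, folded u_def w_def]
  have "T * ((u + w) * H) \<le> T * ((u + w) * (K / 8))"
    using TK uvw by (intro mult_left_mono) auto
  moreover have "K * ((u + w) * (2 * D * W)) \<le> K * ((u + w) * (T / 8))"
    using TK uvw \<open>16 * (D * W) \<le> T\<close> by (intro mult_left_mono) auto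
  moreover have "(16 * W) * (8 * H) \<le> K * T"
    using \<open>16 * W \<le> T\<close> TK W H by (subst mult.commute[of K]) (intro mult_mono, auto)
  moreover have "T * ((u + w) * (K / 8)) + K * ((u + w) * (T / 8)) + K * T / 64
      = K * T * ((u + w) / 4 + 1 / 64)"
    by (simp add: field_simps)
  moreover have "1 \<le> u * v" using uvw by (metis mult_mono' mult_1 zero_le_one)
  then have "w \<le> u * v * w" using uvw by (simp add: mult_le_cancel_right1)
  then have "(u + w) / 4 + 1 / 64 < u * v * w" using uvw by argo
  then have "K * T * ((u + w) / 4 + 1 / 64) < K * T * (u * v * w)"
    using TK by (intro mult_strict_left_mono) auto
  moreover have "orient (shift (a * T) (- K * a\<^sup>2) e1) (shift (b * T) (- K * b\<^sup>2) e2)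
      (shift (c * T) (- K * c\<^sup>2) e3)
    = - (K * T * (u * v * w))
      + (T * (u * (y3 - y1) - w * (y2 - y1))
      + K * (u * (b + a) * (x3 - x1) - w * (c + a) * (x2 - x1))
      + ((x2 - x1) * (y3 - y1) - (y2 - y1) * (x3 - x1)))"
    unfolding e_def orient_shifted_parabola_eq u_def v_def w_def ..
  ultimately show ?thesis using err abc TK by argo
qed

definition block_spacing :: "nat \<Rightarrow> real" where
  "block_spacing d = 16 * (real d + 1) * 4 ^ d"

definition block :: "nat \<Rightarrow> nat \<Rightarrow> point set" where
  "block d i = shift (real i * block_spacing d) (- block_spacing d * (real i)\<^sup>2) ` bit_point ` subsets_of_card d i"

lemma block_S_set: "i \<le> d \<Longrightarrow> S_set (d - i + 2) (i + 2) (block d i)"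
  unfolding block_def by (intro S_set_shift S_set_bit_points)

lemma blockE:
  assumes "p \<in> block d i"
  obtains S where "S \<subseteq> {..<d}"
    and "p = shift (real i * block_spacing d) (- block_spacing d * (real i)\<^sup>2) (bit_point S)"
  using assms unfolding block_def subsets_of_card_def by blast

lemma block_less:
  assumes "i < j" "p \<in> block d i" "q \<in> block d j"
  shows "fst p < fst q" "snd q < snd p"
proof -
  obtain S where S: "S \<subseteq> {..<d}" "p = shift (real i * block_spacing d) (- block_spacing d * (real i)\<^sup>2) (bit_point S)"
    using assms(2) by (rule blockE)
  obtain S' where S': "S' \<subseteq> {..<d}" "q = shift (real j * block_spacing d) (- block_spacing d * (real j)\<^sup>2) (bit_point S')"
    using assms(3) by (rule blockE)
  note bS = bit_point_bounds[OF S(1)] and bS' = bit_point_bounds[OF S'(1)]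
  have T: "0 < block_spacing d" "4 ^ d \<le> block_spacing d" "real d * 4 ^ d < block_spacing d" by (simp_all add: block_spacing_def)
  have "real i + 1 \<le> real j" using assms(1) by simp
  then have "(real i + 1) * block_spacing d \<le> real j * block_spacing d"
    using T by (intro mult_right_mono) auto
  then show "fst p < fst q" using S S' bS bS' T by (simp add: shift_def algebra_simps)
  have "(real i + 1)\<^sup>2 \<le> (real j)\<^sup>2" using \<open>real i + 1 \<le> real j\<close> by (intro power_mono) auto
  then have "(real i)\<^sup>2 + 1 \<le> (real j)\<^sup>2" by (simp add: power2_eq_square algebra_simps)
  then have "block_spacing d * ((real i)\<^sup>2 + 1) \<le> block_spacing d * (real j)\<^sup>2"
    using T by (intro mult_left_mono) auto
  then show "snd q < snd p" using S S' bS bS' T by (simp add: shift_def algebra_simps)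
qed

lemma block_rising:
  assumes "p \<in> block d i" "q \<in> block d i" "p \<noteq> q"
  shows "0 < (fst q - fst p) * (snd q - snd p)"
proof -
  obtain A where A: "A \<subseteq> {..<d}" "p = shift (real i * block_spacing d) (- block_spacing d * (real i)\<^sup>2) (bit_point A)"
    using assms(1) by (rule blockE)
  obtain B where B: "B \<subseteq> {..<d}" "q = shift (real i * block_spacing d) (- block_spacing d * (real i)\<^sup>2) (bit_point B)"
    using assms(2) by (rule blockE)
  have fin: "finite A" "finite B" using A B finite_subset[OF _ finite_lessThan] by blast+
  have "A \<noteq> B" using A B assms(3) by blast
  then obtain j where "colex_less_at A B j \<or> colex_less_at B A j"
    using colex_less_at_cases[OF A(1) B(1)] by blast
  then show ?thesis
    using bit_point_less[OF fin] bit_point_less[OF fin(2,1)] A(2) B(2)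
    by (auto simp: shift_def intro: mult_pos_pos mult_neg_neg)
qed

lemma block_right_turn:
  assumes "i < j" "j < k" "k \<le> d" "p \<in> block d i" "q \<in> block d j" "r \<in> block d k"
  shows "right_turn p q r"
proof -
  define T where "T = block_spacing d"
  have box: "bit_point S \<in> {0..4 ^ d} \<times> {0..real d * 4 ^ d}" if "S \<subseteq> {..<d}" for S
    using bit_point_bounds[OF that] by (simp add: mem_Times_iff)
  obtain A where A: "A \<subseteq> {..<d}" "p = shift (real i * T) (- T * (real i)\<^sup>2) (bit_point A)"
    using assms(4) unfolding T_def by (rule blockE)
  obtain B where B: "B \<subseteq> {..<d}" "q = shift (real j * T) (- T * (real j)\<^sup>2) (bit_point B)"
    using assms(5) unfolding T_def by (rule blockE)
  obtain C where C: "C \<subseteq> {..<d}" "r = shift (real k * T) (- T * (real k)\<^sup>2) (bit_point C)"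
    using assms(6) unfolding T_def by (rule blockE)
  have "orient p q r < 0"
    unfolding A(2) B(2) C(2)
    by (rule orient_shifted_parabola[where D = "real d" and W = "4 ^ d" and H = "real d * 4 ^ d"])
      (use assms box A(1) B(1) C(1) in \<open>auto simp: T_def block_spacing_def\<close>)
  then show ?thesis by (simp add: right_turn_iff_orient)
qed

lemma block_Ints: "p \<in> block d i \<Longrightarrow> fst p \<in> \<int> \<and> snd p \<in> \<int>"
  by (elim blockE) (auto simp: shift_def block_spacing_def intro!: Ints_add Ints_mult bit_point_Ints)

lemma block_spacing_bounds:
  "real d * block_spacing d + 4 ^ d - 1 \<le> 40 * 4 ^ d * real d ^ 3"
  "block_spacing d * (real d)\<^sup>2 + real d * 4 ^ d \<le> 40 * 4 ^ d * real d ^ 3"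
proof -
  have cubic: "16 * (real d)\<^sup>2 + 16 * real d + 1 \<le> 40 * real d ^ 3"
    "16 * real d ^ 3 + 16 * (real d)\<^sup>2 + real d \<le> 40 * real d ^ 3" if "d \<noteq> 0"
  proof -
    have "1 \<le> real d" "real d \<le> (real d)\<^sup>2" "(real d)\<^sup>2 \<le> real d ^ 3"
      using that by (simp_all add: power2_eq_square power3_eq_cube)
    then show "16 * (real d)\<^sup>2 + 16 * real d + 1 \<le> 40 * real d ^ 3"
      "16 * real d ^ 3 + 16 * (real d)\<^sup>2 + real d \<le> 40 * real d ^ 3" by linarith+
  qed
  show "real d * block_spacing d + 4 ^ d - 1 \<le> 40 * 4 ^ d * real d ^ 3"
  proof (cases "d = 0")
    case False
    then have "(16 * (real d)\<^sup>2 + 16 * real d + 1) * 4 ^ d \<le> (40 * real d ^ 3) * 4 ^ d"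
      using cubic(1) by (intro mult_right_mono) auto
    then show ?thesis by (simp add: block_spacing_def algebra_simps power2_eq_square)
  qed (simp add: block_spacing_def)
  show "block_spacing d * (real d)\<^sup>2 + real d * 4 ^ d \<le> 40 * 4 ^ d * real d ^ 3"
  proof (cases "d = 0")
    case False
    then have "(16 * real d ^ 3 + 16 * (real d)\<^sup>2 + real d) * 4 ^ d \<le> (40 * real d ^ 3) * 4 ^ d"
      using cubic(2) by (intro mult_right_mono) auto
    then show ?thesis by (simp add: block_spacing_def algebra_simps power2_eq_square power3_eq_cube)
  qed (simp add: block_spacing_def)
qed

lemma blocks_in_square: "in_square (40 * 4 ^ d * real d ^ 3) (\<Union>i\<in>{0..d}. block d i)"
  unfolding in_square_def
proof (intro exI ballI)
  fix p assume "p \<in> (\<Union>i\<in>{0..d}. block d i)"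
  then obtain i S where "i \<le> d" "S \<subseteq> {..<d}"
    and p: "p = shift (real i * block_spacing d) (- block_spacing d * (real i)\<^sup>2) (bit_point S)"
    by (auto elim: blockE)
  note b = bit_point_bounds[OF \<open>S \<subseteq> {..<d}\<close>]
  have T: "0 \<le> block_spacing d" by (simp add: block_spacing_def)
  have "real i * block_spacing d \<le> real d * block_spacing d"
    using \<open>i \<le> d\<close> T by (intro mult_right_mono) auto
  moreover have "block_spacing d * (real i)\<^sup>2 \<le> block_spacing d * (real d)\<^sup>2"
    using \<open>i \<le> d\<close> T by (intro mult_left_mono power_mono) auto
  moreover have "0 \<le> real i * block_spacing d" "0 \<le> block_spacing d * (real i)\<^sup>2" using T by simp_all
  ultimately show "0 \<le> fst p \<and> fst p \<le> 0 + 40 * 4 ^ d * real d ^ 3 \<and>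
      - block_spacing d * (real d)\<^sup>2 \<le> snd p \<and> snd p \<le> - block_spacing d * (real d)\<^sup>2 + 40 * 4 ^ d * real d ^ 3"
    using b block_spacing_bounds[of d] unfolding p shift_def fst_conv snd_conv by (intro conjI; linarith)
qed

lemma not_collinear3_rising_falling:
  assumes "0 < (fst q - fst p) * (snd q - snd p)" "(fst r - fst p) * (snd r - snd p) < 0"
  shows "\<not> collinear3 p q r"
proof
  assume "collinear3 p q r"
  then have eq: "(fst q - fst p) * (snd r - snd p) = (snd q - snd p) * (fst r - fst p)"
    by (simp add: collinear3_def)
  have "((fst q - fst p) * (snd q - snd p)) * ((fst r - fst p) * (snd r - snd p))
      = ((fst q - fst p) * (snd r - snd p)) * ((snd q - snd p) * (fst r - fst p))"
    by (simp add: algebra_simps)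
  also have "\<dots> = ((fst q - fst p) * (snd r - snd p))\<^sup>2"
    by (simp add: eq power2_eq_square)
  finally show False
    using mult_pos_neg[OF assms] by (metis not_square_less_zero power2_eq_square)
qed

lemma general_position_UN_sorted:
  fixes A :: "nat \<Rightarrow> point set"
  assumes "\<And>i j k p q r. i \<in> I \<Longrightarrow> j \<in> I \<Longrightarrow> k \<in> I \<Longrightarrow> i \<le> j \<Longrightarrow> j \<le> k \<Longrightarrow>
      p \<in> A i \<Longrightarrow> q \<in> A j \<Longrightarrow> r \<in> A k \<Longrightarrow> p \<noteq> q \<Longrightarrow> q \<noteq> r \<Longrightarrow> p \<noteq> r \<Longrightarrow>
      \<not> collinear3 p q r"
  shows "general_position (\<Union>i\<in>I. A i)"
  unfolding general_position_def
proof (intro ballI impI)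
  fix p q r assume "p \<in> (\<Union>i\<in>I. A i)" "q \<in> (\<Union>i\<in>I. A i)" "r \<in> (\<Union>i\<in>I. A i)"
    and d: "p \<noteq> q \<and> q \<noteq> r \<and> p \<noteq> r"
  then obtain i j k where ijk: "i \<in> I" "j \<in> I" "k \<in> I" "p \<in> A i" "q \<in> A j" "r \<in> A k"
    by blast
  consider "i \<le> j" "j \<le> k" | "i \<le> k" "k \<le> j" | "j \<le> i" "i \<le> k"
    | "j \<le> k" "k \<le> i" | "k \<le> i" "i \<le> j" | "k \<le> j" "j \<le> i"
    by linarith
  then show "\<not> collinear3 p q r"
  proof cases
    case 1 then show ?thesis using assms[of i j k p q r] ijk d by blast
  next
    case 2 then show ?thesis using assms[of i k j p r q] ijk d collinear3_perms(2) by blast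
  next
    case 3 then show ?thesis using assms[of j i k q p r] ijk d collinear3_perms(1) by blast
  next
    case 4 then show ?thesis using assms[of j k i q r p] ijk d collinear3_perms(3) by blast
  next
    case 5 then show ?thesis using assms[of k i j r p q] ijk d collinear3_perms(3)[of p q r] by blast
  next
    case 6 then show ?thesis
      using assms[of k j i r q p] ijk d collinear3_perms(1)[of r q p] collinear3_perms(3)[of q r p] by blast
  qed
qed

lemma block_falling:
  assumes "i \<noteq> j" "p \<in> block d i" "q \<in> block d j"
  shows "(fst q - fst p) * (snd q - snd p) < 0"
proof (cases "i < j")
  case True
  then show ?thesis using block_less[OF True assms(2,3)] by (simp add: mult_pos_neg)
next
  case False
  then have "j < i" using assms(1) by simp
  then show ?thesis using block_less[OF \<open>j < i\<close> assms(3,2)] by (simp add: mult_neg_pos)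
qed

lemma blocks_general_position: "general_position (\<Union>i\<in>{0..d}. block d i)"
proof (rule general_position_UN_sorted)
  fix i j k p q r
  assume "i \<in> {0..d}" "j \<in> {0..d}" "k \<in> {0..d}" "i \<le> j" "j \<le> k"
    and pqr: "p \<in> block d i" "q \<in> block d j" "r \<in> block d k"
    and "p \<noteq> q" "q \<noteq> r" "p \<noteq> r"
  consider "i = j" "j = k" | "i = j" "j < k" | "i < j" "j = k" | "i < j" "j < k"
    using \<open>i \<le> j\<close> \<open>j \<le> k\<close> by linarith
  then show "\<not> collinear3 p q r"
  proof cases
    case 1
    have "general_position (block d k)"
      using \<open>k \<in> {0..d}\<close> by (intro S_set_general_position[OF block_S_set]) simp
    then show ?thesis
      using 1 pqr \<open>p \<noteq> q\<close> \<open>q \<noteq> r\<close> \<open>p \<noteq> r\<close> unfolding general_position_def by blast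
  next
    case 2
    show ?thesis
    proof (rule not_collinear3_rising_falling)
      show "0 < (fst q - fst p) * (snd q - snd p)"
        using 2 pqr \<open>p \<noteq> q\<close> by (intro block_rising) simp_all
      show "(fst r - fst p) * (snd r - snd p) < 0"
        using 2 pqr by (intro block_falling) simp_all
    qed
  next
    case 3
    have "\<not> collinear3 q r p"
    proof (rule not_collinear3_rising_falling)
      show "0 < (fst r - fst q) * (snd r - snd q)"
        using 3 pqr \<open>q \<noteq> r\<close> by (intro block_rising) simp_all
      show "(fst p - fst q) * (snd p - snd q) < 0"
        using 3 pqr by (intro block_falling) simp_all
    qed
    then show ?thesis using collinear3_perms(3) by blast
  next
    case 4
    then have "right_turn p q r" using \<open>k \<in> {0..d}\<close> pqr by (intro block_right_turn) simp_all
    then show ?thesis by (simp add: right_turn_iff_orient collinear3_iff_orient)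
  qed
qed

lemma ES_construction_blocks: "ES_construction (d + 2) (\<Union>i\<in>{0..d}. block d i)"
proof -
  have "\<forall>i\<in>{0..d}. S_set (d + 2 - i) (i + 2) (block d i)"
    using block_S_set by (simp add: Suc_diff_le)
  moreover have "\<forall>i\<in>{0..d}. \<forall>j\<in>{0..d}. i < j \<longrightarrow> (\<forall>p\<in>block d i. \<forall>q\<in>block d j. fst p < fst q)"
    by (intro ballI impI) (rule block_less)
  moreover have "\<forall>i\<in>{0..d}. \<forall>j\<in>{0..d}. i \<noteq> j \<longrightarrow> (\<forall>p\<in>block d i. \<forall>q\<in>block d j.
      fst p \<noteq> fst q \<and> (snd q - snd p) / (fst q - fst p) < 0)"
  proof (intro ballI impI)
    fix i j p q assume "i \<noteq> j" "p \<in> block d i" "q \<in> block d j"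
    then have "(fst q - fst p) * (snd q - snd p) < 0" by (rule block_falling)
    then show "fst p \<noteq> fst q \<and> (snd q - snd p) / (fst q - fst p) < 0"
      by (auto simp: mult_less_0_iff divide_less_0_iff)
  qed
  moreover have "\<forall>i j k. i < j \<and> j < k \<and> k \<le> d \<longrightarrow>
      (\<forall>p\<in>block d i. \<forall>q\<in>block d j. \<forall>r\<in>block d k. right_turn p q r)"
    by (auto intro: block_right_turn)
  ultimately show ?thesis
    unfolding ES_construction_def by (intro exI[of _ "block d"]) simp
qed

theorem theorem4:
  shows "\<exists>C::real. C > 0 \<and> (\<forall>t::nat. t \<ge> 2 \<longrightarrow>
     (let n = (2::nat) ^ (t - 2) in
      \<exists>P. ES_construction t P \<and> general_position P \<and> integral_points P \<and>
          in_square (C * (real n)^2 * (log 2 (real n))^3) P))"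
proof (intro exI[of _ 40] conjI allI impI)
  fix t :: nat assume "2 \<le> t"
  define d where "d = t - 2"
  define P where "P = (\<Union>i\<in>{0..d}. block d i)"
  have "d + 2 = t" using \<open>2 \<le> t\<close> by (simp add: d_def)
  then have "ES_construction t P"
    using ES_construction_blocks[of d] by (simp add: P_def)
  moreover have "integral_points P"
    unfolding integral_points_def P_def using block_Ints by blast
  moreover have "40 * (real ((2::nat) ^ d))\<^sup>2 * (log 2 (real ((2::nat) ^ d)))^3 = 40 * 4 ^ d * real d ^ 3"
    by (simp add: power_mult_distrib[symmetric] power2_eq_square)
  ultimately show "let n = (2::nat) ^ (t - 2) in
      \<exists>P. ES_construction t P \<and> general_position P \<and> integral_points P \<and>
          in_square (40 * (real n)\<^sup>2 * (log 2 (real n))^3) P"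
    using blocks_general_position[of d] blocks_in_square[of d]
    unfolding Let_def d_def[symmetric] P_def[symmetric] by metis
qed simp

end
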